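(* Let $G$ be a countable group. Then: (1) If $\mu$ is a finitely additive left-invariant mean on $G$ with $\textup{dc}_\mu(G)=0$ then $\textup{dc}_{\mu'}(G)=0$ for every finitely additive left-invariant mean $\mu'$ on $G$. (2) If $\alpha>\frac{1}{2}$, and there is either a finitely additive left-invariant mean $\mu$ on $G$ with $\textup{dc}_\mu(G)=\alpha$ or a sequence $M$ of probability measures on $G$ that measures index uniformly with $\textup{dc}_M(G)=\alpha$, then $\textup{dc}_{\mu'}(G)=\alpha$ for every finitely additive left-invariant mean $\mu'$ on $G$ and $\textup{dc}_{M'}(G)=\alpha$ for every sequence $M'$ of probability measures on $G$ that measures index uniformly; moreover the $\limsup$ in the definition of $\textup{dc}_{M'}(G)$ is actually a limit.
   Context: A finitely additive left-invariant mean is a positive normalised left-invariant linear functional on $\ell^\infty(G)$, $\mu(X)=\int1_X\,d\mu$, and $\textup{dc}_\mu(G)=\int_x\int_y1_{\{xy=yx\}}\,d\mu(x)\,d\mu(y)$. A sequence $M=(\mu_n)$ of probability measures measures index uniformly if $\mu_n(xH)\to1/[G:H]$ uniformly over $x\in G$ and subgroups $H$ (with $1/[G:H]=0$ for infinite index); $\textup{dc}_M(G)=\limsup_n(\mu_n\times\mu_n)(\{(x,y):xy=yx\})$. *)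

theory Defs
  imports "HOL-Algebra.Coset" "HOL-Probability.Probability"
begin

text \<open>Elements of l-infinity(G): real functions bounded on the carrier of G.
  A function on the ambient type represents its restriction to the carrier.\<close>
definition linfty :: "('a, 'b) monoid_scheme \<Rightarrow> ('a \<Rightarrow> real) set" where
  "linfty G = {f. \<exists>B. \<forall>x\<in>carrier G. \<bar>f x\<bar> \<le> B}"

definition fa_left_inv_mean :: "('a, 'b) monoid_scheme \<Rightarrow> (('a \<Rightarrow> real) \<Rightarrow> real) \<Rightarrow> bool" where
  "fa_left_inv_mean G m \<longleftrightarrow>
     (\<forall>f\<in>linfty G. \<forall>g\<in>linfty G. (\<forall>x\<in>carrier G. f x = g x) \<longrightarrow> m f = m g) \<and>
     (\<forall>f\<in>linfty G. \<forall>g\<in>linfty G. m (\<lambda>x. f x + g x) = m f + m g) \<and>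
     (\<forall>f\<in>linfty G. \<forall>c::real. m (\<lambda>x. c * f x) = c * m f) \<and>
     (\<forall>f\<in>linfty G. (\<forall>x\<in>carrier G. 0 \<le> f x) \<longrightarrow> 0 \<le> m f) \<and>
     m (\<lambda>x. 1) = 1 \<and>
     (\<forall>f\<in>linfty G. \<forall>g\<in>carrier G. m (\<lambda>x. f (g \<otimes>\<^bsub>G\<^esub> x)) = m f)"

definition dc_mean :: "('a, 'b) monoid_scheme \<Rightarrow> (('a \<Rightarrow> real) \<Rightarrow> real) \<Rightarrow> real" where
  "dc_mean G m = m (\<lambda>y. m (\<lambda>x. if x \<otimes>\<^bsub>G\<^esub> y = y \<otimes>\<^bsub>G\<^esub> x then 1 else 0))"

text \<open>1/[G:H], with the convention 1/[G:H] = 0 for infinite index.\<close>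
definition inv_index :: "('a, 'b) monoid_scheme \<Rightarrow> 'a set \<Rightarrow> real" where
  "inv_index G H = (if finite (rcosets\<^bsub>G\<^esub> H) then 1 / real (card (rcosets\<^bsub>G\<^esub> H)) else 0)"

definition measures_index_uniformly :: "('a, 'b) monoid_scheme \<Rightarrow> (nat \<Rightarrow> 'a pmf) \<Rightarrow> bool" where
  "measures_index_uniformly G M \<longleftrightarrow>
     (\<forall>n. set_pmf (M n) \<subseteq> carrier G) \<and>
     (\<forall>e>0. \<exists>N. \<forall>n\<ge>N. \<forall>H. subgroup H G \<longrightarrow> (\<forall>x\<in>carrier G.
         \<bar>measure_pmf.prob (M n) (x <#\<^bsub>G\<^esub> H) - inv_index G H\<bar> < e))"

definition comm_prob :: "('a, 'b) monoid_scheme \<Rightarrow> 'a pmf \<Rightarrow> real" where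
  "comm_prob G p = measure_pmf.prob (pair_pmf p p) {(x, y). x \<otimes>\<^bsub>G\<^esub> y = y \<otimes>\<^bsub>G\<^esub> x}"

definition dc_seq :: "('a, 'b) monoid_scheme \<Rightarrow> (nat \<Rightarrow> 'a pmf) \<Rightarrow> ereal" where
  "dc_seq G M = limsup (\<lambda>n. ereal (comm_prob G (M n)))"

end

(* Write phi(y) = 1/[G : C(y)] for the centralizer C(y). Every left-invariant mean gives a
   subgroup H the mass 1/[G : H]: a set X of positive mean has only boundedly many disjoint left
   translates, and a maximal family of them shows that finitely many translates of X X^-1 cover G.
   Hence dc_mu(G) = mu(phi) for every mean mu, and for a sequence measuring index uniformly the
   commuting probability differs from the expectation of phi by o(1).

   (1) If mu'(phi) > 0, then X = {phi >= e} has positive mu'-mean for some e > 0. As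
   C(a) and C(b) meet inside C(a b^-1), phi >= e^2 on X X^-1, finitely many translates of which
   cover G; so {phi >= e^2} has positive mass for every mean mu, and mu(phi) > 0.

   (2) Off the center Z we have phi <= 1/2, so every mean and every index-uniform sequence gives
   dc <= 1/2 + 1/(2 [G : Z]), and a value above 1/2 forces [G : Z] to be finite. Then phi is
   constant on the cosets of Z, each of which has weight 1/[G : Z] under every mean and, in the
   limit, under every index-uniform sequence; so all of them compute the same average of phi over
   G/Z. *)

theory Submission
  imports Defs "HOL-Algebra.Left_Coset"
begin

(* The ASCII syntax of multiset inclusion collides with left cosets. *)
no_notation (ASCII) subset_mset (infix \<open><#\<close> 50)

lemma linftyI: "(\<And>x. x \<in> carrier G \<Longrightarrow> \<bar>f x\<bar> \<le> B) \<Longrightarrow> f \<in> linfty G"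
  unfolding linfty_def by blast

lemma linfty_unit_interval: "(\<And>x. 0 \<le> f x \<and> f x \<le> 1) \<Longrightarrow> f \<in> linfty G"
  by (rule linftyI[where B = 1]) (simp add: abs_le_iff)

lemma linfty_indicator [simp]: "(indicator S :: 'a \<Rightarrow> real) \<in> linfty G"
  by (rule linfty_unit_interval) (simp add: indicator_def)

lemma linfty_const [simp]: "(\<lambda>x. c) \<in> linfty G"
  by (rule linftyI[where B = "\<bar>c\<bar>"]) simp

lemma linfty_add: "f \<in> linfty G \<Longrightarrow> g \<in> linfty G \<Longrightarrow> (\<lambda>x. f x + g x) \<in> linfty G"
proof -
  assume "f \<in> linfty G" "g \<in> linfty G"
  then obtain A B where "\<forall>x\<in>carrier G. \<bar>f x\<bar> \<le> A" "\<forall>x\<in>carrier G. \<bar>g x\<bar> \<le> B"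
    unfolding linfty_def by blast
  then show ?thesis
    by (intro linftyI[where B = "A + B"]) (auto intro: order.trans[OF abs_triangle_ineq add_mono])
qed

lemma linfty_cmult: "f \<in> linfty G \<Longrightarrow> (\<lambda>x. c * f x) \<in> linfty G"
proof -
  assume "f \<in> linfty G"
  then obtain A where "\<forall>x\<in>carrier G. \<bar>f x\<bar> \<le> A"
    unfolding linfty_def by blast
  then show ?thesis
    by (intro linftyI[where B = "\<bar>c\<bar> * A"]) (simp add: abs_mult mult_left_mono)
qed

lemma linfty_diff: "f \<in> linfty G \<Longrightarrow> g \<in> linfty G \<Longrightarrow> (\<lambda>x. f x - g x) \<in> linfty G"
  using linfty_add[of f G "\<lambda>x. (-1) * g x"] linfty_cmult[of g G "-1"] by simp

lemma linfty_sum: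
  "finite I \<Longrightarrow> (\<And>i. i \<in> I \<Longrightarrow> f i \<in> linfty G) \<Longrightarrow> (\<lambda>x. \<Sum>i\<in>I. f i x) \<in> linfty G"
  by (induction I rule: finite_induct) (auto intro: linfty_add)

lemma linfty_cong: "f \<in> linfty G \<Longrightarrow> (\<And>x. x \<in> carrier G \<Longrightarrow> g x = f x) \<Longrightarrow> g \<in> linfty G"
  unfolding linfty_def by simp

section \<open>Indices of subgroups\<close>

lemma inv_index_unit_interval: "0 \<le> inv_index G H \<and> inv_index G H \<le> 1"
  unfolding inv_index_def by (cases "card (rcosets\<^bsub>G\<^esub> H)") auto

lemma abs_inv_index_le_1 [simp]: "\<bar>inv_index G H\<bar> \<le> 1"
  using inv_index_unit_interval[of G H] by simp

context group
begin

lemma subgroup_in_lcosets: "subgroup H G \<Longrightarrow> H \<in> lcosets H"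
  using lcos_mult_one[OF subgroup.subset] unfolding LCOSETS_def by force

lemma set_inv_l_coset:
  assumes H: "subgroup H G" and a: "a \<in> carrier G"
  shows "set_inv (a <# H) = H #> inv a"
proof (intro equalityI subsetI)
  fix x assume "x \<in> set_inv (a <# H)"
  then obtain h where h: "h \<in> H" "x = inv (a \<otimes> h)"
    by (auto simp: SET_INV_def l_coset_def)
  then have "x = inv h \<otimes> inv a"
    using a subgroup.mem_carrier[OF H] by (simp add: inv_mult_group)
  then show "x \<in> H #> inv a"
    using subgroup.m_inv_closed[OF H h(1)] unfolding r_coset_def by blast
next
  fix x assume "x \<in> H #> inv a"
  then obtain h where h: "h \<in> H" "x = h \<otimes> inv a"
    by (auto simp: r_coset_def)
  then have "x = inv (a \<otimes> inv h)"
    using a subgroup.mem_carrier[OF H] by (simp add: inv_mult_group)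
  moreover have "a \<otimes> inv h \<in> a <# H"
    using subgroup.m_inv_closed[OF H h(1)] unfolding l_coset_def by blast
  ultimately show "x \<in> set_inv (a <# H)"
    unfolding SET_INV_def by blast
qed

lemma bij_betw_set_inv_lcosets:
  assumes H: "subgroup H G"
  shows "bij_betw (\<lambda>X. set_inv X) (lcosets H) (rcosets H)"
  unfolding bij_betw_def
proof
  have "set_inv (set_inv X) = X" if "X \<subseteq> carrier G" for X
    using that by (auto simp: SET_INV_def) (metis inv_inv subsetD)+
  then show "inj_on (\<lambda>X. set_inv X) (lcosets H)"
    using subgroup.lcosets_carrier[OF H is_group] by (metis inj_onI)
  show "(\<lambda>X. set_inv X) ` (lcosets H) = rcosets H"
  proof (intro equalityI subsetI)
    fix X assume "X \<in> rcosets H"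
    then obtain b where b: "b \<in> carrier G" "X = H #> b"
      unfolding RCOSETS_def by blast
    then have "X = set_inv (inv b <# H)"
      using set_inv_l_coset[OF H, of "inv b"] by simp
    then show "X \<in> (\<lambda>X. set_inv X) ` (lcosets H)"
      using b unfolding LCOSETS_def by blast
  qed (use set_inv_l_coset[OF H] in \<open>auto simp: LCOSETS_def RCOSETS_def\<close>)
qed

lemma inv_index_lcosets:
  "subgroup H G \<Longrightarrow> inv_index G H = (if finite (lcosets H) then 1 / real (card (lcosets H)) else 0)"
  using bij_betw_finite bij_betw_same_card bij_betw_set_inv_lcosets unfolding inv_index_def
  by metis

lemma inv_index_finite:
  assumes H: "subgroup H G" and fin: "finite (lcosets H)"
  shows "inv_index G H = 1 / real (card (lcosets H))" and "0 < card (lcosets H)"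
  using inv_index_lcosets[OF H] fin subgroup_in_lcosets[OF H] card_gt_0_iff by auto

lemma finite_lcosets_of_cover:
  assumes H: "subgroup H G" and F: "finite F" "F \<subseteq> carrier G"
    and cover: "carrier G \<subseteq> (\<Union>f\<in>F. f <# H)"
  shows "finite (lcosets H)"
proof (rule finite_surj[OF F(1)])
  show "lcosets H \<subseteq> (\<lambda>f. f <# H) ` F"
  proof
    fix c assume "c \<in> lcosets H"
    then obtain a where a: "a \<in> carrier G" "c = a <# H"
      unfolding LCOSETS_def by blast
    then obtain f where "f \<in> F" "a \<in> f <# H"
      using cover by blast
    then show "c \<in> (\<lambda>f. f <# H) ` F"
      using l_repr_independence[OF _ _ H] a F by blast
  qed
qed

lemma l_coset_Int:
  assumes "H \<subseteq> carrier G" "K \<subseteq> carrier G" "x \<in> carrier G"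
  shows "x <# (H \<inter> K) = (x <# H) \<inter> (x <# K)"
proof (intro equalityI subsetI)
  fix y assume "y \<in> (x <# H) \<inter> (x <# K)"
  then obtain h k where "h \<in> H" "k \<in> K" "y = x \<otimes> h" "y = x \<otimes> k"
    unfolding l_coset_def by blast
  moreover then have "h = k"
    using assms by (metis Units_eq Units_l_cancel subsetD)
  ultimately show "y \<in> x <# (H \<inter> K)"
    unfolding l_coset_def by blast
qed (auto simp: l_coset_def)

lemma inv_index_Int:
  assumes H: "subgroup H G" and K: "subgroup K G"
  shows "inv_index G H * inv_index G K \<le> inv_index G (H \<inter> K)"
proof (cases "finite (lcosets H) \<and> finite (lcosets K)")
  case False
  then show ?thesis
    using inv_index_lcosets[OF H] inv_index_lcosets[OF K] inv_index_unit_interval by auto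
next
  case True
  have HK: "subgroup (H \<inter> K) G"
    using H K by (rule subgroups_Inter_pair)
  have sub: "lcosets (H \<inter> K) \<subseteq> (\<lambda>(A, B). A \<inter> B) ` ((lcosets H) \<times> (lcosets K))"
  proof
    fix c assume "c \<in> lcosets (H \<inter> K)"
    then obtain x where x: "x \<in> carrier G" "c = x <# (H \<inter> K)"
      unfolding LCOSETS_def by blast
    then have "c = (\<lambda>(A, B). A \<inter> B) (x <# H, x <# K)"
      using l_coset_Int[OF subgroup.subset[OF H] subgroup.subset[OF K]] by simp
    moreover have "(x <# H, x <# K) \<in> (lcosets H) \<times> (lcosets K)"
      using x unfolding LCOSETS_def by blast
    ultimately show "c \<in> (\<lambda>(A, B). A \<inter> B) ` ((lcosets H) \<times> (lcosets K))"
      by (rule image_eqI)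
  qed
  have fin: "finite (lcosets (H \<inter> K))"
    using finite_surj[OF _ sub] True by simp
  have "card (lcosets (H \<inter> K)) \<le> card (lcosets H) * card (lcosets K)"
    using surj_card_le[OF _ sub] True by (simp add: card_cartesian_product)
  then have "real (card (lcosets (H \<inter> K))) \<le> real (card (lcosets H)) * real (card (lcosets K))"
    by (metis of_nat_le_iff of_nat_mult)
  then have "1 / (real (card (lcosets H)) * real (card (lcosets K))) \<le> 1 / real (card (lcosets (H \<inter> K)))"
    using inv_index_finite(2)[OF HK fin] by (intro frac_le) auto
  then show ?thesis
    using inv_index_finite(1)[OF H] inv_index_finite(1)[OF K] inv_index_finite(1)[OF HK fin] True
    by simp
qed

lemma inv_index_mono:
  assumes K: "subgroup K G" and H: "subgroup H G" and KH: "K \<subseteq> H"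
  shows "inv_index G K \<le> inv_index G H"
proof (cases "finite (lcosets K)")
  case False
  then show ?thesis
    using inv_index_lcosets[OF K] inv_index_unit_interval by auto
next
  case True
  have "lcosets H \<subseteq> (\<lambda>c. (SOME a. a \<in> c) <# H) ` (lcosets K)"
  proof
    fix c assume "c \<in> lcosets H"
    then obtain x where x: "x \<in> carrier G" "c = x <# H"
      unfolding LCOSETS_def by blast
    have "(SOME a. a \<in> x <# K) \<in> x <# K"
      using lcos_self[OF x(1) K] by (rule someI)
    also have "x <# K \<subseteq> x <# H"
      using KH unfolding l_coset_def by blast
    finally have "c = (SOME a. a \<in> x <# K) <# H"
      using l_repr_independence[OF _ x(1) H] x(2) by blast
    then show "c \<in> (\<lambda>c. (SOME a. a \<in> c) <# H) ` (lcosets K)"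
      using x unfolding LCOSETS_def by blast
  qed
  then have fin: "finite (lcosets H)" and "card (lcosets H) \<le> card (lcosets K)"
    using finite_surj[OF True] surj_card_le[OF True] by blast+
  then show ?thesis
    using inv_index_finite[OF H fin] inv_index_finite[OF K True] by (simp add: frac_le)
qed

lemma inv_index_proper:
  assumes H: "subgroup H G" and g: "g \<in> carrier G" "g \<notin> H"
  shows "inv_index G H \<le> 1/2"
proof (cases "finite (rcosets H)")
  case True
  have "H \<in> rcosets H" "H #> g \<in> rcosets H"
    using coset_mult_one[OF subgroup.subset[OF H]] g unfolding RCOSETS_def by force+
  moreover have "H #> g \<noteq> H"
    using rcos_self[OF g(1) H] g by auto
  ultimately have "card {H, H #> g} \<le> card (rcosets H)"
    using True by (intro card_mono) auto
  then have "2 \<le> real (card (rcosets H))"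
    using \<open>H #> g \<noteq> H\<close> by simp
  then show ?thesis
    using True unfolding inv_index_def by (simp add: divide_simps)
next
  case False
  then show ?thesis unfolding inv_index_def by simp
qed

lemma l_coset_meet_difference_set:
  assumes X: "X \<subseteq> carrier G" and f: "f \<in> carrier G" and g: "g \<in> carrier G"
    and meet: "(f <# X) \<inter> (g <# X) \<noteq> {}"
  shows "\<exists>a\<in>X. \<exists>b\<in>X. g = f \<otimes> (a \<otimes> inv b)"
proof -
  obtain a b where ab: "a \<in> X" "b \<in> X" "f \<otimes> a = g \<otimes> b"
    using meet unfolding l_coset_def by blast
  then have "g = f \<otimes> (a \<otimes> inv b)"
    using X f g by (metis inv_solve_right m_assoc m_closed inv_closed subsetD)
  then show ?thesis
    using ab by blast
qed

lemma coset_constant_decomposition: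
  fixes f :: "'a \<Rightarrow> real"
  assumes H: "subgroup H G" and fin: "finite (lcosets H)"
    and f: "\<And>x h. x \<in> carrier G \<Longrightarrow> h \<in> H \<Longrightarrow> f (x \<otimes> h) = f x"
    and y: "y \<in> carrier G"
  shows "f y = (\<Sum>c\<in>lcosets H. f (SOME a. a \<in> c) * indicator c y)"
proof -
  let ?c = "y <# H"
  have c: "?c \<in> lcosets H"
    using y unfolding LCOSETS_def by blast
  have "(SOME a. a \<in> ?c) \<in> ?c"
    using lcos_self[OF y H] by (rule someI)
  then obtain h where h: "h \<in> H" "(SOME a. a \<in> ?c) = y \<otimes> h"
    unfolding l_coset_def by blast
  have "f (SOME a. a \<in> c) * indicator c y = (if c = ?c then f y else 0)"
    if "c \<in> lcosets H" for c
  proof (cases "c = ?c")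
    case True
    then show ?thesis
      using h f y lcos_self[OF y H] by simp
  next
    case False
    then have "y \<notin> c"
      using lcos_disjoint[OF H that c] lcos_self[OF y H] by blast
    then show ?thesis
      using False by simp
  qed
  then have "(\<Sum>c\<in>lcosets H. f (SOME a. a \<in> c) * indicator c y) =
      (\<Sum>c\<in>lcosets H. if c = ?c then f y else 0)"
    by (rule sum.cong[OF refl])
  also have "\<dots> = f y"
    using fin c by simp
  finally show ?thesis
    by (rule sym)
qed

end

(* Meaningful for functions constant on the left cosets of H, where the representative picked
   by SOME does not matter. *)
definition coset_average :: "('a, 'b) monoid_scheme \<Rightarrow> 'a set \<Rightarrow> ('a \<Rightarrow> real) \<Rightarrow> real" where
  "coset_average G H f = (\<Sum>c\<in>lcosets\<^bsub>G\<^esub> H. f (SOME a. a \<in> c)) * inv_index G H"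

section \<open>Left-invariant means\<close>

locale left_invariant_mean = group G for G (structure) +
  fixes m :: "('a \<Rightarrow> real) \<Rightarrow> real"
  assumes fa_left_inv_mean: "fa_left_inv_mean G m"

lemma (in group) left_invariant_meanI: "fa_left_inv_mean G m \<Longrightarrow> left_invariant_mean G m"
  by (simp add: left_invariant_mean_def left_invariant_mean_axioms_def is_group)

context left_invariant_mean
begin

lemma mean_cong:
  "f \<in> linfty G \<Longrightarrow> g \<in> linfty G \<Longrightarrow> (\<And>x. x \<in> carrier G \<Longrightarrow> f x = g x) \<Longrightarrow> m f = m g"
  using fa_left_inv_mean unfolding fa_left_inv_mean_def by blast

lemma mean_add: "f \<in> linfty G \<Longrightarrow> g \<in> linfty G \<Longrightarrow> m (\<lambda>x. f x + g x) = m f + m g"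
  using fa_left_inv_mean unfolding fa_left_inv_mean_def by blast

lemma mean_cmult: "f \<in> linfty G \<Longrightarrow> m (\<lambda>x. c * f x) = c * m f"
  using fa_left_inv_mean unfolding fa_left_inv_mean_def by blast

lemma mean_nonneg: "f \<in> linfty G \<Longrightarrow> (\<And>x. x \<in> carrier G \<Longrightarrow> 0 \<le> f x) \<Longrightarrow> 0 \<le> m f"
  using fa_left_inv_mean unfolding fa_left_inv_mean_def by blast

lemma mean_one: "m (\<lambda>x. 1) = 1"
  using fa_left_inv_mean unfolding fa_left_inv_mean_def by blast

lemma mean_translate: "f \<in> linfty G \<Longrightarrow> g \<in> carrier G \<Longrightarrow> m (\<lambda>x. f (g \<otimes> x)) = m f"
  using fa_left_inv_mean unfolding fa_left_inv_mean_def by blast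

lemma mean_const: "m (\<lambda>x. c) = c"
  using mean_cmult[of "\<lambda>x. 1" c] mean_one by simp

lemma mean_diff: "f \<in> linfty G \<Longrightarrow> g \<in> linfty G \<Longrightarrow> m (\<lambda>x. f x - g x) = m f - m g"
  using mean_add[of f "\<lambda>x. (-1) * g x"] mean_cmult[of g "-1"] linfty_cmult[of g G "-1"] by simp

lemma mean_mono:
  "f \<in> linfty G \<Longrightarrow> g \<in> linfty G \<Longrightarrow> (\<And>x. x \<in> carrier G \<Longrightarrow> f x \<le> g x) \<Longrightarrow> m f \<le> m g"
  using mean_nonneg[of "\<lambda>x. g x - f x"] mean_diff[of g f] linfty_diff[of g G f] by simp

lemma mean_sum:
  "finite I \<Longrightarrow> (\<And>i. i \<in> I \<Longrightarrow> f i \<in> linfty G) \<Longrightarrow> m (\<lambda>x. \<Sum>i\<in>I. f i x) = (\<Sum>i\<in>I. m (f i))"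
proof (induction I rule: finite_induct)
  case empty
  then show ?case using mean_const[of 0] by simp
next
  case (insert i I)
  then have "m (\<lambda>x. \<Sum>j\<in>insert i I. f j x) = m (\<lambda>x. f i x + (\<Sum>j\<in>I. f j x))"
    by simp
  also have "\<dots> = m (f i) + m (\<lambda>x. \<Sum>j\<in>I. f j x)"
    using insert by (intro mean_add linfty_sum) auto
  finally show ?case using insert by simp
qed

lemma mean_unit_interval: "(\<And>x. 0 \<le> f x \<and> f x \<le> 1) \<Longrightarrow> 0 \<le> m f \<and> m f \<le> 1"
  using mean_nonneg[of f] mean_mono[of f "\<lambda>x. 1"] mean_one linfty_unit_interval[of f G] by force

lemma mean_indicator_unit_interval: "0 \<le> m (indicator S) \<and> m (indicator S) \<le> 1"
  using mean_unit_interval[of "indicator S"] by (simp add: indicator_def)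

lemma mean_indicator_l_coset:
  assumes S: "S \<subseteq> carrier G" and g: "g \<in> carrier G"
  shows "m (indicator (g <# S)) = m (indicator S)"
proof -
  have "g \<otimes> x \<in> g <# S \<longleftrightarrow> x \<in> S" if "x \<in> carrier G" for x
    using that S g by (auto simp: l_coset_def)
  then have "m (indicator (g <# S)) = m (\<lambda>x. indicator (g <# S) (g \<otimes> x))"
    using mean_translate[of "indicator (g <# S)" g] g by simp
  also have "\<dots> = m (indicator S)"
    using \<open>\<And>x. x \<in> carrier G \<Longrightarrow> _\<close>
    by (intro mean_cong linfty_unit_interval) (auto simp: indicator_def)
  finally show ?thesis .
qed

lemma mean_disjoint_translates:
  assumes F: "finite F" "F \<subseteq> carrier G" and X: "X \<subseteq> carrier G"
    and disj: "disjoint_family_on (\<lambda>f. f <# X) F"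
  shows "real (card F) * m (indicator X) \<le> 1"
proof -
  have "real (card F) * m (indicator X) = (\<Sum>f\<in>F. m (indicator (f <# X)))"
    using mean_indicator_l_coset X F by (simp add: subset_iff)
  also have "\<dots> = m (\<lambda>x. \<Sum>f\<in>F. indicator (f <# X) x)"
    using F by (intro mean_sum[symmetric]) auto
  also have "\<dots> = m (indicator (\<Union>f\<in>F. f <# X))"
    by (simp only: indicator_UN_disjoint[OF F(1) disj, symmetric])
  also have "\<dots> \<le> 1"
    using mean_indicator_unit_interval by blast
  finally show ?thesis .
qed

lemma mean_finite_cover_ge:
  assumes S: "S \<subseteq> carrier G" and F: "finite F" "F \<subseteq> carrier G"
    and cover: "carrier G \<subseteq> (\<Union>f\<in>F. f <# S)"
  shows "1 \<le> real (card F) * m (indicator S)"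
proof -
  have pointwise: "1 \<le> (\<Sum>f\<in>F. indicator (f <# S) x :: real)" if "x \<in> carrier G" for x
  proof -
    have "x \<in> (\<Union>f\<in>F. f <# S)"
      using cover that by (rule subsetD)
    then obtain f where f: "f \<in> F" "x \<in> f <# S"
      by (rule UN_E)
    then have "(1 :: real) = indicator (f <# S) x"
      by simp
    also have "\<dots> \<le> (\<Sum>f\<in>F. indicator (f <# S) x)"
      by (rule member_le_sum[OF f(1) _ F(1)]) (simp add: indicator_def)
    finally show ?thesis .
  qed
  have "m (\<lambda>x. 1) \<le> m (\<lambda>x. \<Sum>f\<in>F. indicator (f <# S) x)"
    by (rule mean_mono[OF linfty_const linfty_sum[OF F(1) linfty_indicator] pointwise])
  also have "\<dots> = (\<Sum>f\<in>F. m (indicator (f <# S)))"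
    by (rule mean_sum[OF F(1) linfty_indicator])
  also have "\<dots> = real (card F) * m (indicator S)"
    using F(2) mean_indicator_l_coset[OF S] by (simp add: subset_iff)
  finally show ?thesis
    using mean_one by simp
qed

lemma mean_maximal_disjoint_translates:
  assumes X: "X \<subseteq> carrier G" and pos: "0 < m (indicator X)"
  obtains F where "finite F" "F \<subseteq> carrier G"
    and "\<And>g. g \<in> carrier G \<Longrightarrow> g \<notin> F \<Longrightarrow> \<exists>f\<in>F. (f <# X) \<inter> (g <# X) \<noteq> {}"
proof -
  define packing where
    "packing F \<longleftrightarrow> finite F \<and> F \<subseteq> carrier G \<and> disjoint_family_on (\<lambda>f. f <# X) F" for F
  define packable where "packable n \<longleftrightarrow> (\<exists>F. packing F \<and> card F = n)" for n
  have "packable 0"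
    unfolding packable_def packing_def
    by (intro exI[of _ "{}"]) (simp add: disjoint_family_on_def)
  moreover have "\<forall>k. packable k \<longrightarrow> k \<le> nat \<lfloor>1 / m (indicator X)\<rfloor>"
  proof (intro allI impI)
    fix k assume "packable k"
    then have "real k * m (indicator X) \<le> 1"
      using mean_disjoint_translates X unfolding packable_def packing_def by blast
    then show "k \<le> nat \<lfloor>1 / m (indicator X)\<rfloor>"
      using pos by (intro le_nat_floor) (simp add: le_divide_eq)
  qed
  ultimately have "\<exists>n. packable n \<and> (\<forall>k. packable k \<longrightarrow> k \<le> n)"
    by (rule Nat.ex_has_greatest_nat)
  then obtain F where F: "packing F" and maximal: "\<And>F'. packing F' \<Longrightarrow> card F' \<le> card F"
    unfolding packable_def by blast
  have "\<exists>f\<in>F. (f <# X) \<inter> (g <# X) \<noteq> {}" if g: "g \<in> carrier G" "g \<notin> F" for g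
  proof (rule ccontr)
    assume "\<not> (\<exists>f\<in>F. (f <# X) \<inter> (g <# X) \<noteq> {})"
    then have "(g <# X) \<inter> (\<Union>f\<in>F. f <# X) = {}"
      by blast
    then have "packing (insert g F)"
      using F g unfolding packing_def by (simp add: disjoint_family_on_insert)
    then show False
      using maximal[of "insert g F"] F g unfolding packing_def by simp
  qed
  then show ?thesis
    using F that unfolding packing_def by blast
qed

lemma mean_pos_finite_cover:
  assumes X: "X \<subseteq> carrier G" and pos: "0 < m (indicator X)"
    and XY: "\<And>a b. a \<in> X \<Longrightarrow> b \<in> X \<Longrightarrow> a \<otimes> inv b \<in> Y"
  obtains F where "finite F" "F \<subseteq> carrier G" "carrier G \<subseteq> (\<Union>f\<in>F. f <# Y)"
proof -
  obtain F where F: "finite F" "F \<subseteq> carrier G"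
    and maximal: "\<And>g. g \<in> carrier G \<Longrightarrow> g \<notin> F \<Longrightarrow> \<exists>f\<in>F. (f <# X) \<inter> (g <# X) \<noteq> {}"
    using mean_maximal_disjoint_translates[OF X pos] by blast
  have "X \<noteq> {}"
  proof
    assume "X = {}"
    then have "indicator X = (\<lambda>x. 0 :: real)"
      by (simp add: fun_eq_iff)
    then show False
      using pos mean_const[of 0] by simp
  qed
  then obtain x0 where x0: "x0 \<in> X"
    by blast
  have "g \<in> (\<Union>f\<in>F. f <# Y)" if g: "g \<in> carrier G" for g
  proof (cases "g \<in> F")
    case True
    have "g = g \<otimes> (x0 \<otimes> inv x0)"
      using g x0 X by auto
    then show ?thesis
      using True XY[OF x0 x0] unfolding l_coset_def by blast
  next
    case False
    then obtain f where f: "f \<in> F" "(f <# X) \<inter> (g <# X) \<noteq> {}"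
      using maximal g by blast
    then obtain a b where "a \<in> X" "b \<in> X" "g = f \<otimes> (a \<otimes> inv b)"
      using l_coset_meet_difference_set X F g by blast
    then show ?thesis
      using f(1) XY unfolding l_coset_def by blast
  qed
  then show ?thesis
    using F that by blast
qed

lemma mean_pos_of_difference_set:
  assumes m': "fa_left_inv_mean G m'" and X: "X \<subseteq> carrier G" "0 < m' (indicator X)"
    and Y: "Y \<subseteq> carrier G" and XY: "\<And>a b. a \<in> X \<Longrightarrow> b \<in> X \<Longrightarrow> a \<otimes> inv b \<in> Y"
  shows "0 < m (indicator Y)"
proof -
  interpret m': left_invariant_mean G m'
    using m' by (rule left_invariant_meanI)
  obtain F where F: "finite F" "F \<subseteq> carrier G" and cover: "carrier G \<subseteq> (\<Union>f\<in>F. f <# Y)"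
    using m'.mean_pos_finite_cover[OF X XY] by blast
  have "1 \<le> real (card F) * m (indicator Y)"
    using Y F cover by (rule mean_finite_cover_ge)
  then show ?thesis
    using mean_indicator_unit_interval[of Y] by (cases "m (indicator Y) = 0") auto
qed

lemma mean_subgroup:
  assumes H: "subgroup H G"
  shows "m (indicator H) = inv_index G H"
proof (cases "finite (lcosets H)")
  case True
  have "(\<Sum>c\<in>lcosets H. indicator c x) = (1 :: real)" if "x \<in> carrier G" for x
    using coset_constant_decomposition[OF H True, of "\<lambda>x. 1" x] that by simp
  then have "m (\<lambda>x. \<Sum>c\<in>lcosets H. indicator c x) = m (\<lambda>x. 1)"
    using True by (intro mean_cong linfty_sum linfty_indicator linfty_const) auto
  then have "1 = m (\<lambda>x. \<Sum>c\<in>lcosets H. indicator c x)"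
    using mean_one by simp
  also have "\<dots> = (\<Sum>c\<in>lcosets H. m (indicator c))"
    using True by (intro mean_sum linfty_indicator)
  also have "\<dots> = (\<Sum>c\<in>lcosets H. m (indicator H))"
    using mean_indicator_l_coset[OF subgroup.subset[OF H]] unfolding LCOSETS_def
    by (intro sum.cong) auto
  also have "\<dots> = real (card (lcosets H)) * m (indicator H)"
    by simp
  finally have "m (indicator H) = 1 / real (card (lcosets H))"
    using inv_index_finite(2)[OF H True] by (simp add: field_simps)
  then show ?thesis
    using inv_index_finite(1)[OF H True] by simp
next
  case False
  have "\<not> 0 < m (indicator H)"
  proof
    assume "0 < m (indicator H)"
    then obtain F where "finite F" "F \<subseteq> carrier G" "carrier G \<subseteq> (\<Union>f\<in>F. f <# H)"
      using mean_pos_finite_cover[OF subgroup.subset[OF H]] subgroup.m_closed[OF H]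
        subgroup.m_inv_closed[OF H] by metis
    then show False
      using False finite_lcosets_of_cover[OF H] by blast
  qed
  then show ?thesis
    using False inv_index_lcosets[OF H] mean_indicator_unit_interval[of H] by simp
qed

lemma mean_indicator_lcoset: "subgroup H G \<Longrightarrow> c \<in> lcosets H \<Longrightarrow> m (indicator c) = inv_index G H"
  using mean_indicator_l_coset[OF subgroup.subset] mean_subgroup unfolding LCOSETS_def by auto

lemma mean_coset_constant:
  assumes H: "subgroup H G" "finite (lcosets H)"
    and f: "\<And>x h. x \<in> carrier G \<Longrightarrow> h \<in> H \<Longrightarrow> f (x \<otimes> h) = f x"
  shows "m f = coset_average G H f"
proof -
  let ?g = "\<lambda>y. \<Sum>c\<in>lcosets H. f (SOME a. a \<in> c) * indicator c y"
  have g: "?g \<in> linfty G"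
    using H(2) by (intro linfty_sum linfty_cmult linfty_indicator)
  have fg: "\<And>y. y \<in> carrier G \<Longrightarrow> f y = ?g y"
    using coset_constant_decomposition[OF H f] .
  have "m f = m ?g"
    using linfty_cong[OF g fg] g fg by (rule mean_cong)
  also have "\<dots> = (\<Sum>c\<in>lcosets H. m (\<lambda>y. f (SOME a. a \<in> c) * indicator c y))"
    using H(2) by (intro mean_sum linfty_cmult linfty_indicator)
  also have "\<dots> = (\<Sum>c\<in>lcosets H. f (SOME a. a \<in> c) * inv_index G H)"
    using mean_indicator_lcoset[OF H(1)] by (intro sum.cong) (simp_all add: mean_cmult)
  finally show ?thesis
    unfolding coset_average_def by (simp add: sum_distrib_right)
qed

lemma mean_le_superlevel:
  assumes f: "\<And>x. 0 \<le> f x \<and> f x \<le> 1" and "0 \<le> \<epsilon>"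
  shows "m f \<le> m (indicator {x \<in> carrier G. \<epsilon> \<le> f x}) + \<epsilon>"
proof -
  have "f x \<le> indicator {x \<in> carrier G. \<epsilon> \<le> f x} x + \<epsilon>" if "x \<in> carrier G" for x
    using f[of x] \<open>0 \<le> \<epsilon>\<close> that by (auto simp: indicator_def)
  then have "m f \<le> m (\<lambda>x. indicator {x \<in> carrier G. \<epsilon> \<le> f x} x + \<epsilon>)"
    using f by (intro mean_mono linfty_unit_interval linfty_add linfty_indicator linfty_const)
  then show ?thesis
    using mean_add[of "indicator {x \<in> carrier G. \<epsilon> \<le> f x}" "\<lambda>x. \<epsilon>"] mean_const by simp
qed

lemma mean_ge_superlevel:
  assumes f: "\<And>x. 0 \<le> f x \<and> f x \<le> 1"
  shows "\<epsilon> * m (indicator {x \<in> carrier G. \<epsilon> \<le> f x}) \<le> m f"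
proof -
  have "m (\<lambda>x. \<epsilon> * indicator {x \<in> carrier G. \<epsilon> \<le> f x} x) \<le> m f"
    using f by (intro mean_mono linfty_unit_interval linfty_cmult) (auto simp: indicator_def)
  then show ?thesis
    using mean_cmult by simp
qed

end

section \<open>Centralizers and the center\<close>

definition centralizer :: "('a, 'b) monoid_scheme \<Rightarrow> 'a \<Rightarrow> 'a set" where
  "centralizer G y = {x \<in> carrier G. x \<otimes>\<^bsub>G\<^esub> y = y \<otimes>\<^bsub>G\<^esub> x}"

definition center :: "('a, 'b) monoid_scheme \<Rightarrow> 'a set" where
  "center G = {z \<in> carrier G. \<forall>x\<in>carrier G. z \<otimes>\<^bsub>G\<^esub> x = x \<otimes>\<^bsub>G\<^esub> z}"

context group
begin

lemma centralizer_sym: "x \<in> carrier G \<Longrightarrow> y \<in> carrier G \<Longrightarrow> x \<in> centralizer G y \<longleftrightarrow> y \<in> centralizer G x"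
  unfolding centralizer_def by auto

lemma subgroup_centralizer:
  assumes y: "y \<in> carrier G"
  shows "subgroup (centralizer G y) G"
proof (rule subgroupI)
  show "centralizer G y \<subseteq> carrier G"
    unfolding centralizer_def by blast
  have "\<one> \<in> centralizer G y"
    using y unfolding centralizer_def by simp
  then show "centralizer G y \<noteq> {}"
    by blast
next
  fix a assume "a \<in> centralizer G y"
  then have a: "a \<in> carrier G" "a \<otimes> y = y \<otimes> a"
    unfolding centralizer_def by auto
  have "inv a \<otimes> y = inv a \<otimes> y \<otimes> (a \<otimes> inv a)"
    using a(1) y by simp
  also have "\<dots> = inv a \<otimes> (y \<otimes> a) \<otimes> inv a"
    using a(1) y by (simp add: m_assoc)
  also have "\<dots> = inv a \<otimes> (a \<otimes> y) \<otimes> inv a"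
    using a(2) by simp
  also have "\<dots> = y \<otimes> inv a"
    using a(1) y by (simp add: m_assoc[symmetric])
  finally show "inv a \<in> centralizer G y"
    using a(1) unfolding centralizer_def by blast
next
  fix a b assume "a \<in> centralizer G y" "b \<in> centralizer G y"
  then have ab: "a \<in> carrier G" "b \<in> carrier G" "a \<otimes> y = y \<otimes> a" "b \<otimes> y = y \<otimes> b"
    unfolding centralizer_def by auto
  have "a \<otimes> b \<otimes> y = a \<otimes> (y \<otimes> b)"
    using ab y by (simp add: m_assoc)
  also have "\<dots> = y \<otimes> (a \<otimes> b)"
    using ab y by (simp add: m_assoc[symmetric])
  finally show "a \<otimes> b \<in> centralizer G y"
    using ab unfolding centralizer_def by blast
qed

lemma center_eq_Inter_centralizer: "center G = \<Inter> (centralizer G ` carrier G)"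
  unfolding center_def centralizer_def by auto

lemma subgroup_center: "subgroup (center G) G"
  unfolding center_eq_Inter_centralizer by (rule subgroups_Inter) (auto intro: subgroup_centralizer)

lemma centralizer_Int_subset:
  assumes a: "a \<in> carrier G" and b: "b \<in> carrier G"
  shows "centralizer G a \<inter> centralizer G b \<subseteq> centralizer G (a \<otimes> inv b)"
proof
  fix x assume x: "x \<in> centralizer G a \<inter> centralizer G b"
  then have xc: "x \<in> carrier G"
    unfolding centralizer_def by auto
  then have "a \<in> centralizer G x" "b \<in> centralizer G x"
    using x centralizer_sym[OF xc a] centralizer_sym[OF xc b] by blast+
  then have "a \<otimes> inv b \<in> centralizer G x"
    using subgroup_centralizer[OF xc] by (meson subgroup.m_closed subgroup.m_inv_closed)
  then show "x \<in> centralizer G (a \<otimes> inv b)"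
    using centralizer_sym[OF xc] a b by (meson m_closed inv_closed)
qed

lemma inv_index_centralizer_mult_inv:
  assumes a: "a \<in> carrier G" and b: "b \<in> carrier G"
  shows "inv_index G (centralizer G a) * inv_index G (centralizer G b)
    \<le> inv_index G (centralizer G (a \<otimes> inv b))"
proof -
  have "inv_index G (centralizer G a) * inv_index G (centralizer G b)
      \<le> inv_index G (centralizer G a \<inter> centralizer G b)"
    using a b by (intro inv_index_Int subgroup_centralizer)
  also have "\<dots> \<le> inv_index G (centralizer G (a \<otimes> inv b))"
    using a b centralizer_Int_subset[OF a b]
    by (intro inv_index_mono subgroups_Inter_pair subgroup_centralizer m_closed inv_closed)
  finally show ?thesis .
qed

lemma centralizer_mult_center:
  assumes y: "y \<in> carrier G" and z: "z \<in> center G"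
  shows "centralizer G (y \<otimes> z) = centralizer G y"
proof -
  have zc: "z \<in> carrier G" and zx: "\<And>x. x \<in> carrier G \<Longrightarrow> z \<otimes> x = x \<otimes> z"
    using z unfolding center_def by auto
  have "x \<otimes> (y \<otimes> z) = y \<otimes> z \<otimes> x \<longleftrightarrow> x \<otimes> y = y \<otimes> x" if x: "x \<in> carrier G" for x
    using x y zc zx[OF x] right_cancel[of z "x \<otimes> y" "y \<otimes> x"] by (simp add: m_assoc)
  then show ?thesis
    unfolding centralizer_def by auto
qed

lemma inv_index_centralizer_le:
  assumes y: "y \<in> carrier G"
  shows "inv_index G (centralizer G y) \<le> 1/2 + 1/2 * indicator (center G) y"
proof (cases "y \<in> center G")
  case True
  then show ?thesis
    using inv_index_unit_interval[of G "centralizer G y"] by simp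
next
  case False
  then obtain g where g: "g \<in> carrier G" "y \<otimes> g \<noteq> g \<otimes> y"
    using y unfolding center_def by auto
  then have "g \<notin> centralizer G y"
    using not_sym[OF g(2)] unfolding centralizer_def by auto
  then show ?thesis
    using inv_index_proper[OF subgroup_centralizer[OF y] g(1)] False by simp
qed

end

section \<open>Degree of commutativity with respect to a mean\<close>

context left_invariant_mean
begin

lemma dc_mean_eq: "dc_mean G m = m (\<lambda>y. inv_index G (centralizer G y))"
  unfolding dc_mean_def
proof (rule mean_cong)
  show "(\<lambda>y. m (\<lambda>x. if x \<otimes> y = y \<otimes> x then 1 else 0)) \<in> linfty G"
    by (intro linfty_unit_interval mean_unit_interval) simp
  show "(\<lambda>y. inv_index G (centralizer G y)) \<in> linfty G"
    by (intro linfty_unit_interval inv_index_unit_interval)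
  fix y assume y: "y \<in> carrier G"
  have "m (\<lambda>x. if x \<otimes> y = y \<otimes> x then 1 else 0) = m (indicator (centralizer G y))"
    by (rule mean_cong) (auto simp: centralizer_def intro: linfty_unit_interval)
  then show "m (\<lambda>x. if x \<otimes> y = y \<otimes> x then 1 else 0) = inv_index G (centralizer G y)"
    using mean_subgroup[OF subgroup_centralizer[OF y]] by simp
qed

lemma dc_mean_nonneg: "0 \<le> dc_mean G m"
  unfolding dc_mean_eq by (rule conjunct1[OF mean_unit_interval]) (rule inv_index_unit_interval)

lemma dc_mean_pos:
  assumes m': "fa_left_inv_mean G m'" and pos: "0 < dc_mean G m'"
  shows "0 < dc_mean G m"
proof -
  interpret m': left_invariant_mean G m'
    using m' by (rule left_invariant_meanI)
  define \<phi> where "\<phi> y = inv_index G (centralizer G y)" for y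
  have \<phi>: "0 \<le> \<phi> y \<and> \<phi> y \<le> 1" for y
    unfolding \<phi>_def by (rule inv_index_unit_interval)
  define \<epsilon> where "\<epsilon> = m' \<phi> / 2"
  have \<epsilon>: "0 < \<epsilon>"
    using pos m'.dc_mean_eq unfolding \<epsilon>_def \<phi>_def by simp
  define X where "X = {y \<in> carrier G. \<epsilon> \<le> \<phi> y}"
  define Y where "Y = {y \<in> carrier G. \<epsilon> * \<epsilon> \<le> \<phi> y}"
  have "m' \<phi> \<le> m' (indicator X) + \<epsilon>"
    unfolding X_def using \<phi> \<epsilon> by (intro m'.mean_le_superlevel) auto
  then have "0 < m' (indicator X)"
    using \<epsilon> unfolding \<epsilon>_def by simp
  moreover have "a \<otimes> inv b \<in> Y" if a: "a \<in> X" and b: "b \<in> X" for a b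
  proof -
    have ab: "a \<in> carrier G" "b \<in> carrier G"
      using a b unfolding X_def by auto
    have "\<epsilon> * \<epsilon> \<le> \<phi> a * \<phi> b"
      using a b \<epsilon> unfolding X_def by (intro mult_mono) auto
    also have "\<dots> \<le> \<phi> (a \<otimes> inv b)"
      unfolding \<phi>_def using ab by (rule inv_index_centralizer_mult_inv)
    finally show ?thesis
      using ab unfolding Y_def by simp
  qed
  ultimately have "0 < m (indicator Y)"
    by (intro mean_pos_of_difference_set[OF m']) (auto simp: X_def Y_def)
  then have "0 < \<epsilon> * \<epsilon> * m (indicator Y)"
    using \<epsilon> by simp
  also have "\<dots> \<le> m \<phi>"
    unfolding Y_def using \<phi> by (rule mean_ge_superlevel)
  finally show ?thesis
    unfolding dc_mean_eq \<phi>_def .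
qed

lemma dc_mean_le_center: "dc_mean G m \<le> 1/2 + 1/2 * inv_index G (center G)"
proof -
  let ?g = "\<lambda>y. 1/2 + 1/2 * indicator (center G) y"
  have "dc_mean G m \<le> m ?g"
    unfolding dc_mean_eq
  proof (rule mean_mono)
    show "(\<lambda>y. inv_index G (centralizer G y)) \<in> linfty G"
      by (intro linfty_unit_interval inv_index_unit_interval)
    show "?g \<in> linfty G"
      by (intro linfty_add linfty_const linfty_cmult linfty_indicator)
  qed (rule inv_index_centralizer_le)
  also have "m ?g = m (\<lambda>y. 1/2) + m (\<lambda>y. 1/2 * indicator (center G) y)"
    by (intro mean_add linfty_const linfty_cmult linfty_indicator)
  also have "\<dots> = 1/2 + 1/2 * inv_index G (center G)"
    using mean_const mean_cmult[where f = "indicator (center G)" and c = "1/2"]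
      mean_subgroup[OF subgroup_center] by simp
  finally show ?thesis .
qed

lemma dc_mean_eq_coset_average:
  assumes "finite (lcosets (center G))"
  shows "dc_mean G m = coset_average G (center G) (\<lambda>y. inv_index G (centralizer G y))"
  unfolding dc_mean_eq using subgroup_center assms
  by (rule mean_coset_constant) (simp add: centralizer_mult_center)

end

section \<open>Sequences measuring index uniformly\<close>

lemma measure_pair_pmf:
  "measure_pmf.prob (pair_pmf p q) A = measure_pmf.expectation p (\<lambda>x. measure_pmf.prob q {y. (x, y) \<in> A})"
proof -
  have "emeasure (pair_pmf p q) A = (\<integral>\<^sup>+x. emeasure q {y. (x, y) \<in> A} \<partial>p)"
    unfolding pair_pmf_def emeasure_bind_pmf
    by (intro nn_integral_cong) (simp add: indicator_def flip: nn_integral_indicator)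
  also have "\<dots> = ennreal (measure_pmf.expectation p (\<lambda>x. measure_pmf.prob q {y. (x, y) \<in> A}))"
    by (simp add: measure_pmf.emeasure_eq_measure)
      (intro nn_integral_eq_integral measure_pmf.integrable_const_bound[where B = 1]; simp)
  finally show ?thesis
    by (simp add: measure_pmf.emeasure_eq_measure)
qed

context group
begin

lemma measures_index_uniformly_set_pmf: "measures_index_uniformly G M \<Longrightarrow> set_pmf (M k) \<subseteq> carrier G"
  unfolding measures_index_uniformly_def by blast

lemma measures_index_uniformly_tendsto:
  assumes M: "measures_index_uniformly G M" and H: "subgroup H G" and x: "x \<in> carrier G"
  shows "(\<lambda>k. measure_pmf.prob (M k) (x <# H)) \<longlonglongrightarrow> inv_index G H"
proof (rule LIMSEQ_I)
  fix e :: real assume "0 < e"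
  then show "\<exists>N. \<forall>k\<ge>N. norm (measure_pmf.prob (M k) (x <# H) - inv_index G H) < e"
    using M H x unfolding measures_index_uniformly_def by fastforce
qed

lemma comm_prob_eq_expectation:
  assumes p: "set_pmf p \<subseteq> carrier G"
  shows "comm_prob G p = measure_pmf.expectation p (\<lambda>x. measure_pmf.prob p (centralizer G x))"
  unfolding comm_prob_def measure_pair_pmf
proof (intro integral_cong_AE AE_pmfI)
  fix x assume "x \<in> set_pmf p"
  have "{y. (x, y) \<in> {(x, y). x \<otimes> y = y \<otimes> x}} \<inter> set_pmf p = centralizer G x \<inter> set_pmf p"
    using p unfolding centralizer_def by auto
  then show "measure_pmf.prob p {y. (x, y) \<in> {(x, y). x \<otimes> y = y \<otimes> x}} = measure_pmf.prob p (centralizer G x)"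
    by (metis measure_Int_set_pmf)
qed simp_all

lemma expectation_coset_constant:
  assumes H: "subgroup H G" "finite (lcosets H)"
    and f: "\<And>x h. x \<in> carrier G \<Longrightarrow> h \<in> H \<Longrightarrow> f (x \<otimes> h) = f x"
    and p: "set_pmf p \<subseteq> carrier G"
  shows "measure_pmf.expectation p f = (\<Sum>c\<in>lcosets H. f (SOME a. a \<in> c) * measure_pmf.prob p c)"
proof -
  have "measure_pmf.expectation p f =
      measure_pmf.expectation p (\<lambda>y. \<Sum>c\<in>lcosets H. f (SOME a. a \<in> c) * indicator c y)"
    using coset_constant_decomposition[OF H f] p by (intro integral_cong_AE AE_pmfI) auto
  also have "\<dots> = (\<Sum>c\<in>lcosets H. measure_pmf.expectation p (\<lambda>y. f (SOME a. a \<in> c) * indicator c y))"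
    by (intro Bochner_Integration.integral_sum measure_pmf.integrable_const_bound[where B = "\<bar>f (SOME a. a \<in> c)\<bar>" for c])
      (auto simp: indicator_def)
  finally show ?thesis
    by simp
qed

lemma expectation_coset_constant_tendsto:
  assumes M: "measures_index_uniformly G M" and H: "subgroup H G" "finite (lcosets H)"
    and f: "\<And>x h. x \<in> carrier G \<Longrightarrow> h \<in> H \<Longrightarrow> f (x \<otimes> h) = f x"
  shows "(\<lambda>k. measure_pmf.expectation (M k) f) \<longlonglongrightarrow> coset_average G H f"
proof -
  have "(\<lambda>k. \<Sum>c\<in>lcosets H. f (SOME a. a \<in> c) * measure_pmf.prob (M k) c)
      \<longlonglongrightarrow> (\<Sum>c\<in>lcosets H. f (SOME a. a \<in> c) * inv_index G H)"
  proof (intro tendsto_sum tendsto_mult_left)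
    fix c assume "c \<in> lcosets H"
    then obtain x where "x \<in> carrier G" "c = x <# H"
      unfolding LCOSETS_def by blast
    then show "(\<lambda>k. measure_pmf.prob (M k) c) \<longlonglongrightarrow> inv_index G H"
      using measures_index_uniformly_tendsto[OF M H(1)] by simp
  qed
  then show ?thesis
    using expectation_coset_constant[OF H f measures_index_uniformly_set_pmf[OF M]]
    unfolding coset_average_def sum_distrib_right by simp
qed

lemma comm_prob_minus_expectation_tendsto:
  assumes M: "measures_index_uniformly G M"
  shows "(\<lambda>k. comm_prob G (M k) - measure_pmf.expectation (M k) (\<lambda>y. inv_index G (centralizer G y)))
    \<longlonglongrightarrow> 0"
proof (rule LIMSEQ_I)
  fix e :: real assume e: "0 < e"
  obtain N where N: "\<And>k x. k \<ge> N \<Longrightarrow> x \<in> carrier G \<Longrightarrow>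
      \<bar>measure_pmf.prob (M k) (centralizer G x) - inv_index G (centralizer G x)\<bar> < e / 2"
    using M e subgroup_centralizer lcos_mult_one[OF subgroup.subset[OF subgroup_centralizer]]
    unfolding measures_index_uniformly_def by (metis half_gt_zero one_closed)
  have "\<bar>comm_prob G (M k) - measure_pmf.expectation (M k) (\<lambda>y. inv_index G (centralizer G y))\<bar> < e"
    if k: "k \<ge> N" for k
  proof -
    let ?d = "\<lambda>x. measure_pmf.prob (M k) (centralizer G x) - inv_index G (centralizer G x)"
    have int: "integrable (M k) (\<lambda>x. inv_index G (centralizer G x))"
      "integrable (M k) (\<lambda>x. measure_pmf.prob (M k) (centralizer G x))"
      by (auto intro!: measure_pmf.integrable_const_bound[where B = 1])
    have "\<bar>comm_prob G (M k) - measure_pmf.expectation (M k) (\<lambda>y. inv_index G (centralizer G y))\<bar>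
        = \<bar>measure_pmf.expectation (M k) ?d\<bar>"
      using comm_prob_eq_expectation[OF measures_index_uniformly_set_pmf[OF M]] int by simp
    also have "\<dots> \<le> measure_pmf.expectation (M k) (\<lambda>x. \<bar>?d x\<bar>)"
      by (rule integral_abs_bound)
    also have "\<dots> \<le> e / 2"
      using N[OF k] measures_index_uniformly_set_pmf[OF M] int
      by (intro measure_pmf.integral_le_const AE_pmfI) (auto intro!: integrable_abs less_imp_le)
    finally show ?thesis
      using e by simp
  qed
  then show "\<exists>N. \<forall>k\<ge>N. norm (comm_prob G (M k) -
      measure_pmf.expectation (M k) (\<lambda>y. inv_index G (centralizer G y)) - 0) < e"
    by auto
qed

lemma dc_seq_le_center:
  assumes M: "measures_index_uniformly G M"
  shows "dc_seq G M \<le> ereal (1/2 + 1/2 * inv_index G (center G))"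
proof -
  let ?E = "\<lambda>k. measure_pmf.expectation (M k) (\<lambda>y. inv_index G (centralizer G y))"
  define u where
    "u k = (comm_prob G (M k) - ?E k) + (1/2 + 1/2 * measure_pmf.prob (M k) (center G))" for k
  have le_u: "comm_prob G (M k) \<le> u k" for k
  proof -
    have "?E k \<le> measure_pmf.expectation (M k) (\<lambda>y. 1/2 + 1/2 * indicator (center G) y)"
    proof (rule integral_mono_AE)
      show "AE y in M k. inv_index G (centralizer G y) \<le> 1/2 + 1/2 * indicator (center G) y"
        using inv_index_centralizer_le measures_index_uniformly_set_pmf[OF M] by (intro AE_pmfI) blast
    qed (auto intro!: measure_pmf.integrable_const_bound[where B = 1] simp: indicator_def)
    also have "\<dots> = 1/2 + 1/2 * measure_pmf.prob (M k) (center G)"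
      by (simp add: measure_pmf.integrable_const_bound[where B = 1])
    finally show ?thesis
      unfolding u_def by simp
  qed
  have "(\<lambda>k. measure_pmf.prob (M k) (center G)) \<longlonglongrightarrow> inv_index G (center G)"
    using measures_index_uniformly_tendsto[OF M subgroup_center one_closed]
      lcos_mult_one[OF subgroup.subset[OF subgroup_center]] by simp
  then have "u \<longlonglongrightarrow> 0 + (1/2 + 1/2 * inv_index G (center G))"
    unfolding u_def
    by (intro tendsto_add tendsto_const tendsto_mult_left comm_prob_minus_expectation_tendsto[OF M])
  have "dc_seq G M \<le> limsup (\<lambda>k. ereal (u k))"
    unfolding dc_seq_def using le_u by (intro Limsup_mono) auto
  also have "\<dots> = ereal (1/2 + 1/2 * inv_index G (center G))"
    using \<open>u \<longlonglongrightarrow> _\<close> by (intro lim_imp_Limsup) (auto intro: tendsto_ereal)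
  finally show ?thesis .
qed

lemma comm_prob_tendsto_coset_average:
  assumes fin: "finite (lcosets (center G))" and M: "measures_index_uniformly G M"
  shows "(\<lambda>k. comm_prob G (M k)) \<longlonglongrightarrow> coset_average G (center G) (\<lambda>y. inv_index G (centralizer G y))"
proof -
  have "(\<lambda>k. (comm_prob G (M k) - measure_pmf.expectation (M k) (\<lambda>y. inv_index G (centralizer G y)))
      + measure_pmf.expectation (M k) (\<lambda>y. inv_index G (centralizer G y)))
    \<longlonglongrightarrow> 0 + coset_average G (center G) (\<lambda>y. inv_index G (centralizer G y))"
    using comm_prob_minus_expectation_tendsto[OF M]
      expectation_coset_constant_tendsto[OF M subgroup_center fin] centralizer_mult_center
    by (intro tendsto_add) auto
  then show ?thesis
    by simp
qed

end

context group
begin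

lemma dc_mean_eq_0_iff:
  assumes m: "fa_left_inv_mean G m" and m': "fa_left_inv_mean G m'"
  shows "dc_mean G m = 0 \<longleftrightarrow> dc_mean G m' = 0"
proof -
  interpret M: left_invariant_mean G m
    using m by (rule left_invariant_meanI)
  interpret M': left_invariant_mean G m'
    using m' by (rule left_invariant_meanI)
  show ?thesis
    using M.dc_mean_pos[OF m'] M'.dc_mean_pos[OF m] M.dc_mean_nonneg M'.dc_mean_nonneg
    by (smt (verit))
qed

lemma finite_lcosets_center_of_dc_gt_half:
  assumes \<alpha>: "1/2 < \<alpha>" and attained: "(\<exists>m. fa_left_inv_mean G m \<and> dc_mean G m = \<alpha>) \<or>
    (\<exists>M. measures_index_uniformly G M \<and> dc_seq G M = ereal \<alpha>)"
  shows "finite (lcosets (center G))"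
proof -
  have "\<alpha> \<le> 1/2 + 1/2 * inv_index G (center G)"
    using attained
  proof
    assume "\<exists>m. fa_left_inv_mean G m \<and> dc_mean G m = \<alpha>"
    then show ?thesis
      using left_invariant_mean.dc_mean_le_center[OF left_invariant_meanI] by blast
  next
    assume "\<exists>M. measures_index_uniformly G M \<and> dc_seq G M = ereal \<alpha>"
    then obtain M where M: "measures_index_uniformly G M" "dc_seq G M = ereal \<alpha>"
      by blast
    then show ?thesis
      using dc_seq_le_center[OF M(1)] by simp
  qed
  then have "inv_index G (center G) \<noteq> 0"
    using \<alpha> by auto
  then show ?thesis
    using inv_index_lcosets[OF subgroup_center] by metis
qed

lemma dc_seq_eq_coset_average:
  assumes "finite (lcosets (center G))" "measures_index_uniformly G M"
  shows "dc_seq G M = ereal (coset_average G (center G) (\<lambda>y. inv_index G (centralizer G y)))"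
  unfolding dc_seq_def using comm_prob_tendsto_coset_average[OF assms]
  by (intro lim_imp_Limsup) (auto intro: tendsto_ereal)

lemma dc_eq_coset_average_of_attained:
  assumes \<alpha>: "1/2 < \<alpha>" and attained: "(\<exists>m. fa_left_inv_mean G m \<and> dc_mean G m = \<alpha>) \<or>
    (\<exists>M. measures_index_uniformly G M \<and> dc_seq G M = ereal \<alpha>)"
  shows "(\<forall>m. fa_left_inv_mean G m \<longrightarrow> dc_mean G m = \<alpha>) \<and>
    (\<forall>M. measures_index_uniformly G M \<longrightarrow>
      dc_seq G M = ereal \<alpha> \<and> (\<lambda>k. comm_prob G (M k)) \<longlonglongrightarrow> \<alpha>)"
proof -
  let ?V = "coset_average G (center G) (\<lambda>y. inv_index G (centralizer G y))"
  have fin: "finite (lcosets (center G))"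
    using \<alpha> attained by (rule finite_lcosets_center_of_dc_gt_half)
  have means: "dc_mean G m = ?V" if "fa_left_inv_mean G m" for m
    using left_invariant_mean.dc_mean_eq_coset_average[OF left_invariant_meanI[OF that] fin] .
  have seqs: "dc_seq G M = ereal ?V \<and> (\<lambda>k. comm_prob G (M k)) \<longlonglongrightarrow> ?V"
    if "measures_index_uniformly G M" for M
    using dc_seq_eq_coset_average[OF fin that] comm_prob_tendsto_coset_average[OF fin that] by simp
  have "\<alpha> = ?V"
    using attained
  proof
    assume "\<exists>m. fa_left_inv_mean G m \<and> dc_mean G m = \<alpha>"
    then show ?thesis
      using means by blast
  next
    assume "\<exists>M. measures_index_uniformly G M \<and> dc_seq G M = ereal \<alpha>"
    then obtain M where M: "measures_index_uniformly G M" "dc_seq G M = ereal \<alpha>"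
      by blast
    then show ?thesis
      using seqs[OF M(1)] by simp
  qed
  then show ?thesis
    using means seqs by simp
qed

end

theorem corollary1p20:
  fixes G :: "('a, 'b) monoid_scheme"
  assumes "group G" and "countable (carrier G)"
  shows "(\<forall>m. fa_left_inv_mean G m \<and> dc_mean G m = 0 \<longrightarrow>
            (\<forall>m'. fa_left_inv_mean G m' \<longrightarrow> dc_mean G m' = 0))
       \<and> (\<forall>\<alpha>::real. \<alpha> > 1/2 \<longrightarrow>
            ((\<exists>m. fa_left_inv_mean G m \<and> dc_mean G m = \<alpha>) \<or>
             (\<exists>M. measures_index_uniformly G M \<and> dc_seq G M = ereal \<alpha>)) \<longrightarrow>
            (\<forall>m'. fa_left_inv_mean G m' \<longrightarrow> dc_mean G m' = \<alpha>) \<and>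
            (\<forall>M'. measures_index_uniformly G M' \<longrightarrow>
               dc_seq G M' = ereal \<alpha> \<and> (\<lambda>n. comm_prob G (M' n)) \<longlonglongrightarrow> \<alpha>))"
proof -
  interpret group G by fact
  show ?thesis
    using dc_mean_eq_0_iff dc_eq_coset_average_of_attained by blast
qed

end
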